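(* Let $R$ be an associative ring with identity, let $a,b,c\in R$ and put $t=cab$. Suppose $t$ is regular. Then the following are equivalent: (i) $a$ has a $(b,c)$-inverse; (ii) $r(a)\cap bR=\{0\}$ and $R=abR\oplus r(c)$; (iii) $r(t)=r(b)$ and $tR=cR$; (iv) $l(t)=l(c)$ and $Rt=Rb$; (v) $l(t)=l(c)$ and $r(t)=r(b)$.
   Context: For $a,b,c\in R$, $a$ is $(b,c)$-invertible if there exists $y\in R$ with $y\in (bRy)\cap(yRc)$, $yab=b$ and $cay=c$; such $y$ is unique and called the $(b,c)$-inverse of $a$, denoted $a^{\|(b,c)}$. An element is regular if $x=xzx$ for some $z\in R$. For $x\in R$: $l(x)=\{z\in R:zx=0\}$, $r(x)=\{z\in R:xz=0\}$, $xR=\{xz:z\in R\}$, $Rx=\{zx:z\in R\}$; $\oplus$ denotes an internal direct sum of right ideals (additive subgroups). *)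

theory Defs
  imports Main
begin

definition right_ann :: "'a::ring_1 \<Rightarrow> 'a set" where
  "right_ann x = {z. x * z = 0}"

definition left_ann :: "'a::ring_1 \<Rightarrow> 'a set" where
  "left_ann x = {z. z * x = 0}"

definition right_ideal_gen :: "'a::ring_1 \<Rightarrow> 'a set" where
  "right_ideal_gen x = {x * z | z. True}"

definition left_ideal_gen :: "'a::ring_1 \<Rightarrow> 'a set" where
  "left_ideal_gen x = {z * x | z. True}"

definition regular_elem :: "'a::ring_1 \<Rightarrow> bool" where
  "regular_elem x \<longleftrightarrow> (\<exists>z. x = x * z * x)"

definition is_bc_inverse :: "'a::ring_1 \<Rightarrow> 'a \<Rightarrow> 'a \<Rightarrow> 'a \<Rightarrow> bool" where
  "is_bc_inverse a b c y \<longleftrightarrow>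
     y \<in> {b * z * y | z. True} \<and> y \<in> {y * z * c | z. True} \<and> y * a * b = b \<and> c * a * y = c"

definition bc_invertible :: "'a::ring_1 \<Rightarrow> 'a \<Rightarrow> 'a \<Rightarrow> bool" where
  "bc_invertible a b c \<longleftrightarrow> (\<exists>y. is_bc_inverse a b c y)"

definition internal_direct_sum :: "'a::ring_1 set \<Rightarrow> 'a set \<Rightarrow> 'a set \<Rightarrow> bool" where
  "internal_direct_sum S A B \<longleftrightarrow> S = {u + v | u v. u \<in> A \<and> v \<in> B} \<and> A \<inter> B = {0}"

end

theory Submission
  imports Defs
begin

text \<open>Put \<open>t = cab\<close>. The \<open>(b,c)\<close>-inverse exists exactly when \<open>b \<in> Rt\<close> and \<open>c \<in> tR\<close>:
  from \<open>b = xt\<close> and \<open>c = tz\<close> the element \<open>y = bz = xc\<close> is the inverse. Since always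
  \<open>Rt \<subseteq> Rb\<close>, \<open>tR \<subseteq> cR\<close>, \<open>r(b) \<subseteq> r(t)\<close> and \<open>l(c) \<subseteq> l(t)\<close>, each condition of the theorem
  is a reformulation of one or both memberships; the annihilator conditions need regularity of
  \<open>t\<close>, because \<open>r(t) \<subseteq> r(b)\<close> applied to \<open>1 - st\<close> (where \<open>t = tst\<close>) gives \<open>b = bst\<close>.\<close>

lemma bc_invertible_iff_mem_ideal_gen:
  fixes a b c :: "'a::ring_1"
  shows "bc_invertible a b c \<longleftrightarrow>
           b \<in> left_ideal_gen (c * a * b) \<and> c \<in> right_ideal_gen (c * a * b)"
proof
  assume "bc_invertible a b c"
  then obtain y u v where y_left: "y = b * u * y" and y_right: "y = y * v * c"
    and yab: "y * a * b = b" and cay: "c * a * y = c"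
    unfolding bc_invertible_def is_bc_inverse_def by blast
  have "b = (y * v) * (c * a * b)"
    using yab y_right by (metis mult.assoc)
  moreover have "c = (c * a * b) * (u * y)"
    using cay y_left by (metis mult.assoc)
  ultimately show "b \<in> left_ideal_gen (c * a * b) \<and> c \<in> right_ideal_gen (c * a * b)"
    unfolding left_ideal_gen_def right_ideal_gen_def by blast
next
  assume "b \<in> left_ideal_gen (c * a * b) \<and> c \<in> right_ideal_gen (c * a * b)"
  then obtain x z where x: "b = x * (c * a * b)" and z: "c = c * a * b * z"
    unfolding left_ideal_gen_def right_ideal_gen_def by blast
  define y where "y = b * z"
  have xc: "x * c = y"
    using x z unfolding y_def by (metis mult.assoc)
  have yab: "y * a * b = b"
    using x xc by (metis mult.assoc)
  have cay: "c * a * y = c"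
    using z unfolding y_def by (simp add: mult.assoc)
  have yay: "y * a * y = y"
    using yab unfolding y_def by (metis mult.assoc)
  have "y = b * (z * a) * y" and "y = y * (a * x) * c"
    using yay xc unfolding y_def by (simp_all add: mult.assoc)
  then show "bc_invertible a b c"
    unfolding bc_invertible_def is_bc_inverse_def using yab cay by blast
qed

lemma right_ideal_gen_mult_eq_iff:
  fixes x y :: "'a::ring_1"
  shows "right_ideal_gen (x * y) = right_ideal_gen x \<longleftrightarrow> x \<in> right_ideal_gen (x * y)"
proof
  assume "right_ideal_gen (x * y) = right_ideal_gen x"
  moreover have "x \<in> right_ideal_gen x"
    unfolding right_ideal_gen_def by (metis (mono_tags) mem_Collect_eq mult_1_right)
  ultimately show "x \<in> right_ideal_gen (x * y)" by simp
next
  assume "x \<in> right_ideal_gen (x * y)"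
  then obtain z where "x = x * y * z"
    unfolding right_ideal_gen_def by blast
  then show "right_ideal_gen (x * y) = right_ideal_gen x"
    unfolding right_ideal_gen_def by (auto simp: mult.assoc) (metis mult.assoc)
qed

lemma left_ideal_gen_mult_eq_iff:
  fixes x y :: "'a::ring_1"
  shows "left_ideal_gen (y * x) = left_ideal_gen x \<longleftrightarrow> x \<in> left_ideal_gen (y * x)"
proof
  assume "left_ideal_gen (y * x) = left_ideal_gen x"
  moreover have "x \<in> left_ideal_gen x"
    unfolding left_ideal_gen_def by (metis (mono_tags) mem_Collect_eq mult_1_left)
  ultimately show "x \<in> left_ideal_gen (y * x)" by simp
next
  assume "x \<in> left_ideal_gen (y * x)"
  then obtain z where "x = z * (y * x)"
    unfolding left_ideal_gen_def by blast
  then show "left_ideal_gen (y * x) = left_ideal_gen x"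
    unfolding left_ideal_gen_def by (auto simp flip: mult.assoc) (metis mult.assoc)
qed

lemma right_ann_mult_eq_iff:
  fixes x y :: "'a::ring_1"
  assumes "regular_elem (y * x)"
  shows "right_ann (y * x) = right_ann x \<longleftrightarrow> x \<in> left_ideal_gen (y * x)"
proof
  obtain s where s: "y * x = y * x * s * (y * x)"
    using assms unfolding regular_elem_def by blast
  assume "right_ann (y * x) = right_ann x"
  moreover have "y * x * (1 - s * (y * x)) = 0"
    using s by (simp add: algebra_simps mult.assoc)
  ultimately have "x * (1 - s * (y * x)) = 0"
    unfolding right_ann_def by blast
  then have "x = (x * s) * (y * x)"
    by (simp add: algebra_simps mult.assoc)
  then show "x \<in> left_ideal_gen (y * x)"
    unfolding left_ideal_gen_def by blast
next
  assume "x \<in> left_ideal_gen (y * x)"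
  then obtain z where "x = z * (y * x)"
    unfolding left_ideal_gen_def by blast
  then show "right_ann (y * x) = right_ann x"
    unfolding right_ann_def by (auto simp: mult.assoc) (metis mult.assoc mult_zero_right)
qed

lemma left_ann_mult_eq_iff:
  fixes x y :: "'a::ring_1"
  assumes "regular_elem (x * y)"
  shows "left_ann (x * y) = left_ann x \<longleftrightarrow> x \<in> right_ideal_gen (x * y)"
proof
  obtain s where s: "x * y = x * y * s * (x * y)"
    using assms unfolding regular_elem_def by blast
  assume "left_ann (x * y) = left_ann x"
  moreover have "(1 - x * y * s) * (x * y) = 0"
    using s by (simp add: algebra_simps mult.assoc)
  ultimately have "(1 - x * y * s) * x = 0"
    unfolding left_ann_def by blast
  then have "x = (x * y) * (s * x)"
    by (simp add: algebra_simps mult.assoc)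
  then show "x \<in> right_ideal_gen (x * y)"
    unfolding right_ideal_gen_def by blast
next
  assume "x \<in> right_ideal_gen (x * y)"
  then obtain z where "x = x * y * z"
    unfolding right_ideal_gen_def by blast
  then show "left_ann (x * y) = left_ann x"
    unfolding left_ann_def by (auto simp flip: mult.assoc) (metis mult.assoc mult_zero_left)
qed

lemma right_ann_inter_zero_iff:
  fixes a b c :: "'a::ring_1"
  shows "right_ann a \<inter> right_ideal_gen b = {0} \<and> right_ideal_gen (a * b) \<inter> right_ann c = {0}
           \<longleftrightarrow> right_ann (c * a * b) \<subseteq> right_ann b"
proof
  assume "right_ann a \<inter> right_ideal_gen b = {0} \<and> right_ideal_gen (a * b) \<inter> right_ann c = {0}"
  then have ab: "right_ann a \<inter> right_ideal_gen b = {0}"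
    and abc: "right_ideal_gen (a * b) \<inter> right_ann c = {0}"
    by blast+
  show "right_ann (c * a * b) \<subseteq> right_ann b"
  proof
    fix w assume "w \<in> right_ann (c * a * b)"
    then have "a * b * w \<in> right_ideal_gen (a * b) \<inter> right_ann c"
      unfolding right_ann_def right_ideal_gen_def by (auto simp: mult.assoc)
    then have "b * w \<in> right_ann a \<inter> right_ideal_gen b"
      using abc unfolding right_ann_def right_ideal_gen_def by (auto simp: mult.assoc)
    then show "w \<in> right_ann b"
      using ab unfolding right_ann_def by blast
  qed
next
  assume cab: "right_ann (c * a * b) \<subseteq> right_ann b"
  have zero_mem: "0 \<in> right_ann x \<inter> right_ideal_gen y" for x y :: 'a
    unfolding right_ann_def right_ideal_gen_def by (auto intro: exI[of _ 0])
  have right_ann_cab: "b * v = 0" if "c * (a * (b * v)) = 0" for v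
    using that cab unfolding right_ann_def by (auto simp: mult.assoc)
  have "right_ann a \<inter> right_ideal_gen b \<subseteq> {0}"
    unfolding right_ann_def right_ideal_gen_def using right_ann_cab by force
  moreover have "right_ideal_gen (a * b) \<inter> right_ann c \<subseteq> {0}"
    unfolding right_ann_def right_ideal_gen_def using right_ann_cab by (force simp: mult.assoc)
  ultimately show "right_ann a \<inter> right_ideal_gen b = {0} \<and> right_ideal_gen (a * b) \<inter> right_ann c = {0}"
    using zero_mem[of a b] zero_mem[of c "a * b"] by blast
qed

lemma sum_right_ideal_gen_right_ann_eq_UNIV_iff:
  fixes x c :: "'a::ring_1"
  shows "UNIV = {u + v | u v. u \<in> right_ideal_gen x \<and> v \<in> right_ann c}
           \<longleftrightarrow> c \<in> right_ideal_gen (c * x)"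
proof
  assume "UNIV = {u + v | u v. u \<in> right_ideal_gen x \<and> v \<in> right_ann c}"
  then obtain u v where "1 = x * u + v" and "c * v = 0"
    unfolding right_ideal_gen_def right_ann_def by blast
  then have "c = c * x * u"
    by (metis add_0_right distrib_left mult.assoc mult_1_right)
  then show "c \<in> right_ideal_gen (c * x)"
    unfolding right_ideal_gen_def by blast
next
  assume "c \<in> right_ideal_gen (c * x)"
  then obtain z where z: "c = c * x * z"
    unfolding right_ideal_gen_def by blast
  have "w \<in> {u + v | u v. u \<in> right_ideal_gen x \<and> v \<in> right_ann c}" for w
  proof -
    have "c * (w - x * (z * w)) = 0"
      using z by (simp add: algebra_simps flip: mult.assoc)
    moreover have "w = x * (z * w) + (w - x * (z * w))"
      by simp
    ultimately show ?thesis
      unfolding right_ideal_gen_def right_ann_def by blast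
  qed
  then show "UNIV = {u + v | u v. u \<in> right_ideal_gen x \<and> v \<in> right_ann c}"
    by blast
qed

lemma right_ann_subset_mult_left:
  fixes x y :: "'a::ring_1"
  shows "right_ann x \<subseteq> right_ann (y * x)"
  unfolding right_ann_def by (auto simp: mult.assoc)

theorem theorem3p4:
  fixes a b c :: "'a::ring_1"
  assumes "regular_elem (c * a * b)"
  shows "(bc_invertible a b c \<longleftrightarrow>
            right_ann a \<inter> right_ideal_gen b = {0} \<and>
            internal_direct_sum UNIV (right_ideal_gen (a * b)) (right_ann c))
       \<and> (bc_invertible a b c \<longleftrightarrow>
            right_ann (c * a * b) = right_ann b \<and> right_ideal_gen (c * a * b) = right_ideal_gen c)
       \<and> (bc_invertible a b c \<longleftrightarrow>
            left_ann (c * a * b) = left_ann c \<and> left_ideal_gen (c * a * b) = left_ideal_gen b)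
       \<and> (bc_invertible a b c \<longleftrightarrow>
            left_ann (c * a * b) = left_ann c \<and> right_ann (c * a * b) = right_ann b)"
proof -
  have t_right: "c * a * b = c * (a * b)"
    by (simp add: mult.assoc)
  have b_mem_iff_ann: "right_ann (c * a * b) = right_ann b \<longleftrightarrow> b \<in> left_ideal_gen (c * a * b)"
    using right_ann_mult_eq_iff[of "c * a" b] assms by simp
  have b_mem_iff_ideal: "left_ideal_gen (c * a * b) = left_ideal_gen b \<longleftrightarrow> b \<in> left_ideal_gen (c * a * b)"
    using left_ideal_gen_mult_eq_iff[of "c * a" b] by simp
  have c_mem_iff_ann: "left_ann (c * a * b) = left_ann c \<longleftrightarrow> c \<in> right_ideal_gen (c * a * b)"
    using left_ann_mult_eq_iff[of c "a * b"] assms by (simp add: t_right)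
  have c_mem_iff_ideal: "right_ideal_gen (c * a * b) = right_ideal_gen c \<longleftrightarrow> c \<in> right_ideal_gen (c * a * b)"
    using right_ideal_gen_mult_eq_iff[of c "a * b"] by (simp add: t_right)
  have direct_sum_iff: "right_ann a \<inter> right_ideal_gen b = {0}
        \<and> internal_direct_sum UNIV (right_ideal_gen (a * b)) (right_ann c)
      \<longleftrightarrow> right_ann (c * a * b) = right_ann b \<and> c \<in> right_ideal_gen (c * a * b)"
    using right_ann_inter_zero_iff[of a b c] sum_right_ideal_gen_right_ann_eq_UNIV_iff[of "a * b" c]
      right_ann_subset_mult_left[of b "c * a"]
    unfolding internal_direct_sum_def by (auto simp: t_right)
  show ?thesis
    using bc_invertible_iff_mem_ideal_gen[of a b c] direct_sum_iff
      b_mem_iff_ann b_mem_iff_ideal c_mem_iff_ann c_mem_iff_ideal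
    by blast
qed

end
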